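(* Let $\tau,t\in\mathbb{R}$ and let $\beta_n=\beta_n(\tau,t)$, $n\ge1$, be the recurrence coefficients of the monic orthogonal polynomials for the weight $\omega(x;\tau,t)=\exp(-x^6+\tau x^4+tx^2)$ on $\mathbb{R}$. Then $$\lim_{n\to\infty}\frac{\beta_n}{n^{1/3}}=\frac{1}{\sqrt[3]{60}}.$$
   Context: The monic polynomials $P_n(x)$ of exact degree $n$ satisfy $\int_{-\infty}^{\infty}P_m(x)P_n(x)\,\omega(x;\tau,t)\,dx=h_n\delta_{mn}$ with $h_n>0$. Since the weight is even, they satisfy the three-term recurrence $P_{n+1}(x)=xP_n(x)-\beta_nP_{n-1}(x)$ with $P_{-1}=0$, $P_0=1$, and $\beta_n=h_n/h_{n-1}>0$ for $n\ge1$. *)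

theory Defs
  imports "HOL-Analysis.Analysis" "HOL-Computational_Algebra.Polynomial"
begin

definition omega :: "real \<Rightarrow> real \<Rightarrow> real \<Rightarrow> real" where
  "omega \<tau> t x = exp (- (x ^ 6) + \<tau> * x ^ 4 + t * x ^ 2)"

definition wip :: "real \<Rightarrow> real \<Rightarrow> real poly \<Rightarrow> real poly \<Rightarrow> real" where
  "wip \<tau> t p q = (LINT x|lborel. poly p x * poly q x * omega \<tau> t x)"

definition monic_OPS :: "real \<Rightarrow> real \<Rightarrow> (nat \<Rightarrow> real poly) \<Rightarrow> bool" where
  "monic_OPS \<tau> t P \<longleftrightarrow>
     (\<forall>n. degree (P n) = n \<and> lead_coeff (P n) = 1) \<and>
     (\<forall>m n. m \<noteq> n \<longrightarrow> wip \<tau> t (P m) (P n) = 0)"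

definition hnorm :: "real \<Rightarrow> real \<Rightarrow> (nat \<Rightarrow> real poly) \<Rightarrow> nat \<Rightarrow> real" where
  "hnorm \<tau> t P n = wip \<tau> t (P n) (P n)"

text \<open>Recurrence coefficient beta_n = h_n / h_(n-1), meaningful for n \<ge> 1.\<close>
definition rbeta :: "real \<Rightarrow> real \<Rightarrow> (nat \<Rightarrow> real poly) \<Rightarrow> nat \<Rightarrow> real" where
  "rbeta \<tau> t P n = hnorm \<tau> t P n / hnorm \<tau> t P (n - 1)"

end

theory Submission
  imports Defs "HOL-Probability.Distributions" "HOL-Real_Asymp.Real_Asymp"
begin

(* Integrating (P_n P_(n-1))' against the weight by parts and expanding x^5 P_n, x^3 P_n and x P_n
   with the three-term recurrence x P_n = P_(n+1) + beta_n P_(n-1) gives the Freud equation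
   n = beta_n (6 Q_n - 4 tau (beta_(n-1) + beta_n + beta_(n+1)) - 2 t), where Q_n is a quadratic
   form in beta_(n-2), ..., beta_(n+2) dominating 3/4 (beta_(n-1) + beta_n + beta_(n+1))^2.
   Hence beta_n^3 <= n for large beta_n, so u_n = beta_n / n^(1/3) is bounded and u_n Q_n(u)
   tends to 1/6. Evaluating this at indices where u_n is close to its limsup L (all neighbours
   eventually at least the liminf l), and where it is close to l (neighbours at most L), gives
   L (L^2 + 4 L l + 5 l^2) <= 1/6 <= l (l^2 + 4 l L + 5 L^2), i.e. (L - l) (L^2 + l^2) <= 0.
   Hence L = l and 10 L^3 = 1/6. *)

section \<open>Asymptotics of solutions of the Freud equation\<close>

lemma Bseq_limsup_witness:
  fixes u :: "nat \<Rightarrow> real"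
  assumes "Bseq u"
  obtains r L M where "\<And>k. k \<le> r k" "(\<lambda>k. u (r k)) \<longlonglongrightarrow> L"
    "\<And>k n. k \<le> n \<Longrightarrow> u n \<le> M k" "M \<longlonglongrightarrow> L"
proof -
  define M where "M k = (SUP n\<in>{k..}. u n)" for k
  have above: "bdd_above (u ` {k..})" for k
    using Bseq_bdd_above[OF assms] by (rule bdd_above_mono) auto
  have u_le_M: "u n \<le> M k" if "k \<le> n" for k n
    unfolding M_def using that above by (intro cSUP_upper) auto
  have below: "bdd_below (range M)"
  proof (rule bdd_belowI2)
    fix k
    show "Inf (range u) \<le> M k"
      using cInf_lower[OF rangeI Bseq_bdd_below[OF assms], of k] u_le_M[of k k] by simp
  qed
  have "decseq M"
    unfolding M_def using above by (intro decseq_SucI cSUP_subset_mono) auto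
  with below have M_lim: "M \<longlonglongrightarrow> Inf (range M)"
    by (rule LIMSEQ_decseq_INF)
  have "\<exists>n\<ge>k. M k - 1 / (real k + 1) < u n" for k
  proof -
    have "M k - 1 / (real k + 1) < M k" by simp
    then show ?thesis unfolding M_def[of k] using less_cSUP_iff[OF _ above] by auto
  qed
  then obtain r where r: "\<And>k. k \<le> r k" "\<And>k. M k - 1 / (real k + 1) < u (r k)"
    by metis
  have "(\<lambda>k. u (r k)) \<longlonglongrightarrow> Inf (range M)"
  proof (rule tendsto_sandwich)
    show "\<forall>\<^sub>F k in sequentially. M k - 1 / (real k + 1) \<le> u (r k)"
      using r(2) by (simp add: less_imp_le)
    show "\<forall>\<^sub>F k in sequentially. u (r k) \<le> M k"
      using r(1) u_le_M by simp
    have "(\<lambda>k. 1 / (real k + 1)) \<longlonglongrightarrow> 0" by real_asymp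
    then show "(\<lambda>k. M k - 1 / (real k + 1)) \<longlonglongrightarrow> Inf (range M)"
      using tendsto_diff[OF M_lim] by fastforce
  qed (rule M_lim)
  from that[OF r(1) this u_le_M M_lim] show ?thesis .
qed

lemma Bseq_liminf_witness:
  fixes u :: "nat \<Rightarrow> real"
  assumes "Bseq u"
  obtains r l m where "\<And>k. k \<le> r k" "(\<lambda>k. u (r k)) \<longlonglongrightarrow> l"
    "\<And>k n. k \<le> n \<Longrightarrow> m k \<le> u n" "m \<longlonglongrightarrow> l"
proof -
  have "Bseq (\<lambda>n. - u n)" using assms by (simp add: Bseq_minus_iff)
  then obtain r L M where r: "\<And>k. k \<le> r k" and lim: "(\<lambda>k. - u (r k)) \<longlonglongrightarrow> L"
    and le: "\<And>k n. k \<le> n \<Longrightarrow> - u n \<le> M k" and M: "M \<longlonglongrightarrow> L"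
    by (rule Bseq_limsup_witness) blast
  show ?thesis
  proof (rule that)
    show "k \<le> r k" for k by (rule r)
    show "(\<lambda>k. u (r k)) \<longlonglongrightarrow> - L" using tendsto_minus[OF lim] by simp
    show "- M k \<le> u n" if "k \<le> n" for k n using le[OF that] by simp
    show "(\<lambda>k. - M k) \<longlonglongrightarrow> - L" using M by (rule tendsto_minus)
  qed
qed

(* Q_n of the Freud equation; for n < 2 the truncated indices n - 1, n - 2 make it junk. *)
definition freud_quadratic :: "(nat \<Rightarrow> real) \<Rightarrow> nat \<Rightarrow> real" where
  "freud_quadratic b n =
     b (n+2) * b (n+1) + b (n+1)^2 + 2 * b (n+1) * b n + b (n+1) * b (n-1)
     + b n ^ 2 + 2 * b n * b (n-1) + b (n-1)^2 + b (n-1) * b (n-2)"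

definition freud_rhs :: "real \<Rightarrow> real \<Rightarrow> (nat \<Rightarrow> real) \<Rightarrow> nat \<Rightarrow> real" where
  "freud_rhs \<tau> t b n =
     b n * (6 * freud_quadratic b n - 4 * \<tau> * (b (n-1) + b n + b (n+1)) - 2 * t)"

lemma freud_quadratic_scale: "freud_quadratic (\<lambda>j. c * b j) n = c^2 * freud_quadratic b n"
  by (simp add: freud_quadratic_def algebra_simps power2_eq_square)

lemma freud_quadratic_peak:
  assumes "0 < n"
  shows "freud_quadratic (\<lambda>j. if j = n then x else y) n = x^2 + 4 * x * y + 5 * y^2"
proof -
  have "n - 1 \<noteq> n" "n - 2 \<noteq> n" using assms by arith+
  then show ?thesis by (simp add: freud_quadratic_def power2_eq_square algebra_simps)
qed

lemma freud_quadratic_mono: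
  assumes "\<And>j. n - 2 \<le> j \<Longrightarrow> j \<le> n + 2 \<Longrightarrow> 0 \<le> a j \<and> a j \<le> b j"
  shows "freud_quadratic a n \<le> freud_quadratic b n"
proof -
  have window: "0 \<le> a i \<and> a i \<le> b i" if "i \<in> {n-2, n-1, n, n+1, n+2}" for i
    using assms that by auto
  have "a i * a j \<le> b i * b j" if "i \<in> {n-2, n-1, n, n+1, n+2}" "j \<in> {n-2, n-1, n, n+1, n+2}" for i j
    using window[OF that(1)] window[OF that(2)] by (intro mult_mono) (auto intro: order_trans)
  then show ?thesis
    unfolding freud_quadratic_def power2_eq_square
    by (intro add_mono mult_left_mono) auto
qed

lemma freud_quadratic_ge_square:
  assumes "\<And>j. n - 2 \<le> j \<Longrightarrow> j \<le> n + 2 \<Longrightarrow> 0 \<le> b j"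
  shows "3 * (b (n-1) + b n + b (n+1))^2 \<le> 4 * freud_quadratic b n"
proof -
  have "0 \<le> b (n+2) * b (n+1) + b (n-1) * b (n-2)" using assms by simp
  moreover have "0 \<le> (b (n-1) - b (n+1))^2 + 2 * b n * (b (n-1) + b (n+1)) + b n ^ 2"
    using assms by simp
  ultimately show ?thesis
    unfolding freud_quadratic_def by (simp add: power2_eq_square algebra_simps)
qed

lemma freud_rhs_root_bound:
  assumes nonneg: "\<And>j. 0 \<le> b j" and eq: "real n = freud_rhs \<tau> t b n"
  shows "b n \<le> 4 * \<bar>\<tau>\<bar> + 2 * \<bar>t\<bar> + 1 + root 3 (real n)"
proof -
  define s where "s = b (n-1) + b n + b (n+1)"
  define K where "K = 4 * \<bar>\<tau>\<bar> + 2 * \<bar>t\<bar> + 1"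
  have bs: "b n \<le> s" unfolding s_def using nonneg by (simp add: add_nonneg_nonneg)
  show ?thesis
  proof (cases "s \<le> K")
    case True
    moreover have "0 \<le> root 3 (real n)" by simp
    ultimately show ?thesis using bs unfolding K_def by linarith
  next
    case False
    then have "1 \<le> s" unfolding K_def by linarith
    have "4 * \<bar>\<tau>\<bar> * s + 2 * \<bar>t\<bar> \<le> (K - 1) * s"
      using \<open>1 \<le> s\<close> mult_left_mono[of 1 s "\<bar>t\<bar>"] unfolding K_def by (simp add: algebra_simps)
    also have "\<dots> \<le> s^2" using False \<open>1 \<le> s\<close> by (simp add: power2_eq_square mult_right_mono)
    finally have lin: "4 * \<bar>\<tau>\<bar> * s + 2 * \<bar>t\<bar> \<le> s^2" .
    have "\<tau> * s \<le> \<bar>\<tau>\<bar> * s" using \<open>1 \<le> s\<close> by (intro mult_right_mono) auto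
    moreover have "3 * s^2 \<le> 4 * freud_quadratic b n"
      unfolding s_def using nonneg by (rule freud_quadratic_ge_square)
    moreover have "b n ^ 2 \<le> s^2" using bs nonneg by (intro power_mono) auto
    ultimately have "b n ^ 2 \<le> 6 * freud_quadratic b n - 4 * \<tau> * s - 2 * t"
      using lin abs_ge_self[of t] zero_le_power2[of s] by linarith
    then have "b n * b n ^ 2 \<le> real n"
      using eq nonneg[of n] unfolding freud_rhs_def s_def by (simp add: mult_left_mono)
    then have "root 3 (b n ^ 3) \<le> root 3 (real n)" by (simp add: power2_eq_square power3_eq_cube)
    then show ?thesis using nonneg[of n] unfolding K_def by (simp add: real_root_power_cancel)
  qed
qed

lemma freud_quadratic_ge_neighbours:
  assumes "0 < n" "0 \<le> y" "\<And>j. n - 2 \<le> j \<Longrightarrow> j \<le> n + 2 \<Longrightarrow> j \<noteq> n \<Longrightarrow> y \<le> u j"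
    "0 \<le> u n"
  shows "u n ^ 2 + 4 * u n * y + 5 * y^2 \<le> freud_quadratic u n"
proof -
  have "freud_quadratic (\<lambda>j. if j = n then u n else y) n \<le> freud_quadratic u n"
    using assms by (intro freud_quadratic_mono) auto
  then show ?thesis using assms(1) by (simp add: freud_quadratic_peak)
qed

lemma freud_quadratic_le_neighbours:
  assumes "0 < n" "\<And>j. n - 2 \<le> j \<Longrightarrow> j \<le> n + 2 \<Longrightarrow> 0 \<le> u j"
    "\<And>j. n - 2 \<le> j \<Longrightarrow> j \<le> n + 2 \<Longrightarrow> j \<noteq> n \<Longrightarrow> u j \<le> y"
  shows "freud_quadratic u n \<le> u n ^ 2 + 4 * u n * y + 5 * y^2"
proof -
  have "freud_quadratic u n \<le> freud_quadratic (\<lambda>j. if j = n then u n else y) n"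
    using assms by (intro freud_quadratic_mono) auto
  then show ?thesis using assms(1) by (simp add: freud_quadratic_peak)
qed

lemma freud_product_limit_ge:
  fixes u m :: "nat \<Rightarrow> real" and p :: "nat \<Rightarrow> nat"
  assumes nonneg: "\<And>n. 0 \<le> u n" and lim: "(\<lambda>n. u n * freud_quadratic u n) \<longlonglongrightarrow> 1/6"
    and p: "\<And>k. k + 2 \<le> p k" and u_p: "(\<lambda>k. u (p k)) \<longlonglongrightarrow> x"
    and m: "m \<longlonglongrightarrow> y" "\<And>k. 0 \<le> m k" "\<And>k n. k \<le> n \<Longrightarrow> m k \<le> u n"
  shows "x * (x^2 + 4 * x * y + 5 * y^2) \<le> 1/6"
proof (rule LIMSEQ_le)
  show "(\<lambda>k. u (p k) * (u (p k) ^ 2 + 4 * u (p k) * m k + 5 * m k ^ 2))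
      \<longlonglongrightarrow> x * (x^2 + 4 * x * y + 5 * y^2)"
    by (intro tendsto_intros u_p m)
  have "filterlim p sequentially sequentially"
    by (rule filterlim_at_top_mono[OF filterlim_ident])
      (simp add: always_eventually order_trans[OF le_add1 p])
  with lim show "(\<lambda>k. u (p k) * freud_quadratic u (p k)) \<longlonglongrightarrow> 1/6"
    by (rule filterlim_compose)
  show "\<exists>N. \<forall>k\<ge>N. u (p k) * (u (p k) ^ 2 + 4 * u (p k) * m k + 5 * m k ^ 2)
      \<le> u (p k) * freud_quadratic u (p k)"
  proof (intro exI allI impI mult_left_mono freud_quadratic_ge_neighbours)
    fix k j assume "p k - 2 \<le> j"
    then show "m k \<le> u j" using p[of k] by (intro m) linarith
  qed (use p[THEN less_le_trans[rotated]] nonneg m(2) in auto)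
qed

lemma freud_product_limit_le:
  fixes u M :: "nat \<Rightarrow> real" and p :: "nat \<Rightarrow> nat"
  assumes nonneg: "\<And>n. 0 \<le> u n" and lim: "(\<lambda>n. u n * freud_quadratic u n) \<longlonglongrightarrow> 1/6"
    and p: "\<And>k. k + 2 \<le> p k" and u_p: "(\<lambda>k. u (p k)) \<longlonglongrightarrow> x"
    and M: "M \<longlonglongrightarrow> y" "\<And>k n. k \<le> n \<Longrightarrow> u n \<le> M k"
  shows "1/6 \<le> x * (x^2 + 4 * x * y + 5 * y^2)"
proof (rule LIMSEQ_le)
  show "(\<lambda>k. u (p k) * (u (p k) ^ 2 + 4 * u (p k) * M k + 5 * M k ^ 2))
      \<longlonglongrightarrow> x * (x^2 + 4 * x * y + 5 * y^2)"
    by (intro tendsto_intros u_p M)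
  have "filterlim p sequentially sequentially"
    by (rule filterlim_at_top_mono[OF filterlim_ident])
      (simp add: always_eventually order_trans[OF le_add1 p])
  with lim show "(\<lambda>k. u (p k) * freud_quadratic u (p k)) \<longlonglongrightarrow> 1/6"
    by (rule filterlim_compose)
  show "\<exists>N. \<forall>k\<ge>N. u (p k) * freud_quadratic u (p k)
      \<le> u (p k) * (u (p k) ^ 2 + 4 * u (p k) * M k + 5 * M k ^ 2)"
  proof (intro exI allI impI mult_left_mono freud_quadratic_le_neighbours)
    fix k j assume "p k - 2 \<le> j"
    then show "u j \<le> M k" using p[of k] by (intro M) linarith
  qed (use p[THEN less_le_trans[rotated]] nonneg in auto)
qed

lemma tendsto_of_freud_product:
  fixes u :: "nat \<Rightarrow> real"
  assumes bounded: "Bseq u" and nonneg: "\<And>n. 0 \<le> u n"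
    and lim: "(\<lambda>n. u n * freud_quadratic u n) \<longlonglongrightarrow> 1/6"
  shows "u \<longlonglongrightarrow> 1 / root 3 60"
proof -
  obtain r L M where r: "\<And>k. k \<le> r k" and u_r: "(\<lambda>k. u (r k)) \<longlonglongrightarrow> L"
    and u_le_M: "\<And>k n. k \<le> n \<Longrightarrow> u n \<le> M k" and M: "M \<longlonglongrightarrow> L"
    using bounded by (rule Bseq_limsup_witness) blast
  obtain r' l m where r': "\<And>k. k \<le> r' k" and u_r': "(\<lambda>k. u (r' k)) \<longlonglongrightarrow> l"
    and m_le_u: "\<And>k n. k \<le> n \<Longrightarrow> m k \<le> u n" and m: "m \<longlonglongrightarrow> l"
    using bounded by (rule Bseq_liminf_witness) blast
  have "0 \<le> l" using u_r' nonneg by (auto intro: LIMSEQ_le_const)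
  have "l \<le> L" using u_r' M u_le_M[OF r'] by (auto intro: LIMSEQ_le)
  have upper: "L * (L^2 + 4 * L * l + 5 * l^2) \<le> 1/6"
  proof (rule freud_product_limit_ge[OF nonneg lim,
        where p = "\<lambda>k. r (k + 2)" and m = "\<lambda>k. max 0 (m k)"])
    \<comment> \<open>clipped at 0 because freud_quadratic is monotone only on nonnegative sequences\<close>
    show "(\<lambda>k. max 0 (m k)) \<longlonglongrightarrow> l"
      using tendsto_max[OF tendsto_const m, of 0] \<open>0 \<le> l\<close> by (simp add: max_absorb2)
    show "max 0 (m k) \<le> u n" if "k \<le> n" for k n
      using m_le_u[OF that] nonneg[of n] by simp
  qed (use r LIMSEQ_ignore_initial_segment[OF u_r, of 2] in auto)
  have lower: "1/6 \<le> l * (l^2 + 4 * l * L + 5 * L^2)"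
    by (rule freud_product_limit_le[OF nonneg lim _ LIMSEQ_ignore_initial_segment[OF u_r', of 2] M u_le_M])
      (rule r')
  from upper lower have "(L - l) * (L^2 + l^2) \<le> 0"
    by (simp add: algebra_simps power2_eq_square)
  moreover have "0 < L^2 + l^2" if "l < L"
    using that \<open>0 \<le> l\<close> by (intro add_pos_nonneg) auto
  ultimately have "L = l"
    using \<open>l \<le> L\<close> by (meson antisym_conv1 diff_gt_0_iff_gt mult_pos_pos not_le)
  have "u \<longlonglongrightarrow> l"
    by (rule tendsto_sandwich[OF _ _ m M[unfolded \<open>L = l\<close>]]) (use m_le_u u_le_M in simp_all)
  moreover have "l = 1 / root 3 60"
  proof -
    have "l ^ 3 = 1 / 60" using upper lower \<open>L = l\<close>
      by (simp add: power2_eq_square power3_eq_cube)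
    then have "root 3 (l ^ 3) = root 3 (1 / 60)" by (rule arg_cong)
    then show ?thesis using \<open>0 \<le> l\<close> by (simp add: real_root_power_cancel real_root_divide)
  qed
  ultimately show ?thesis by simp
qed

lemma freud_rhs_lower_order_tendsto_0:
  fixes b :: "nat \<Rightarrow> real"
  assumes nonneg: "\<And>n. 0 \<le> b n" and bound: "\<And>n. 1 \<le> n \<Longrightarrow> b n \<le> C * root 3 (real n)"
  shows "(\<lambda>n. (4 * \<tau> * b n * (b (n-1) + b n + b (n+1)) + 2 * t * b n) / (6 * real n)) \<longlonglongrightarrow> 0"
proof (rule Lim_null_comparison)
  define D where "D n = C * root 3 (real n + 1)" for n
  show "\<forall>\<^sub>F n in sequentially. norm ((4 * \<tau> * b n * (b (n-1) + b n + b (n+1)) + 2 * t * b n) / (6 * real n))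
      \<le> (12 * \<bar>\<tau>\<bar> * D n ^ 2 + 2 * \<bar>t\<bar> * D n) / (6 * real n)"
  proof (rule eventually_sequentiallyI[of 2])
    fix n :: nat assume "2 \<le> n"
    have D: "b j \<le> D n" if "n - 1 \<le> j" "j \<le> n + 1" for j
    proof -
      have "b j \<le> C * root 3 (real j)" using bound that \<open>2 \<le> n\<close> by simp
      also have "\<dots> \<le> D n"
        unfolding D_def using that bound[of 1] nonneg[of 1]
        by (intro mult_left_mono) (auto simp: zero_le_mult_iff)
      finally show ?thesis .
    qed
    then have "b (n-1) \<le> D n" "b n \<le> D n" "b (n+1) \<le> D n" by auto
    have "\<bar>4 * \<tau> * b n * (b (n-1) + b n + b (n+1)) + 2 * t * b n\<bar>
        \<le> 4 * \<bar>\<tau>\<bar> * b n * (b (n-1) + b n + b (n+1)) + 2 * \<bar>t\<bar> * b n"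
      using nonneg by (simp add: abs_mult order_trans[OF abs_triangle_ineq])
    also have "\<dots> \<le> 4 * \<bar>\<tau>\<bar> * D n * (3 * D n) + 2 * \<bar>t\<bar> * D n"
      using \<open>b (n-1) \<le> D n\<close> \<open>b n \<le> D n\<close> \<open>b (n+1) \<le> D n\<close> nonneg[of n]
      by (intro add_mono mult_mono mult_left_mono) (auto intro: add_nonneg_nonneg nonneg)
    finally show "norm ((4 * \<tau> * b n * (b (n-1) + b n + b (n+1)) + 2 * t * b n) / (6 * real n))
        \<le> (12 * \<bar>\<tau>\<bar> * D n ^ 2 + 2 * \<bar>t\<bar> * D n) / (6 * real n)"
      by (simp add: abs_divide divide_right_mono power2_eq_square)
  qed
  have "(\<lambda>n. root 3 (real n + 1) ^ 2 / real n) \<longlonglongrightarrow> 0"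
    "(\<lambda>n. root 3 (real n + 1) / real n) \<longlonglongrightarrow> 0"
    by real_asymp+
  from tendsto_add[OF tendsto_mult_right_zero[OF this(1), of "2 * \<bar>\<tau>\<bar> * C^2"]
      tendsto_mult_right_zero[OF this(2), of "\<bar>t\<bar> * C / 3"]]
  show "(\<lambda>n. (12 * \<bar>\<tau>\<bar> * D n ^ 2 + 2 * \<bar>t\<bar> * D n) / (6 * real n)) \<longlonglongrightarrow> 0"
    unfolding D_def by (simp add: add_divide_distrib power_mult_distrib ac_simps)
qed

lemma freud_rhs_leading_term:
  fixes b :: "nat \<Rightarrow> real"
  assumes nonneg: "\<And>n. 0 \<le> b n" and eq: "\<And>n. N \<le> n \<Longrightarrow> real n = freud_rhs \<tau> t b n"
    and bound: "\<And>n. 1 \<le> n \<Longrightarrow> b n \<le> C * root 3 (real n)"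
  shows "(\<lambda>n. b n * freud_quadratic b n / real n) \<longlonglongrightarrow> 1/6"
proof -
  define E where "E n = (4 * \<tau> * b n * (b (n-1) + b n + b (n+1)) + 2 * t * b n) / (6 * real n)" for n
  have "(\<lambda>n. 1/6 + E n) \<longlonglongrightarrow> 1/6"
    using tendsto_add[OF tendsto_const freud_rhs_lower_order_tendsto_0[OF nonneg bound]]
    unfolding E_def by simp
  moreover have "1/6 + E n = b n * freud_quadratic b n / real n" if "max N 1 \<le> n" for n
    using eq[of n] that unfolding E_def freud_rhs_def by (simp add: field_simps)
  ultimately show ?thesis
    by (rule Lim_transform_eventually[OF _ eventually_sequentiallyI])
qed

lemma freud_quadratic_rescaled_bounds:
  fixes b :: "nat \<Rightarrow> real"
  defines "u \<equiv> \<lambda>j. b j / root 3 (real j)"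
  assumes nonneg: "\<And>j. 0 \<le> b j" and "3 \<le> n"
  shows "root 3 (real n - 2) ^ 2 * freud_quadratic u n \<le> freud_quadratic b n"
    and "freud_quadratic b n \<le> root 3 (real n + 2) ^ 2 * freud_quadratic u n"
proof -
  have window: "root 3 (real n - 2) * u j \<le> b j \<and> b j \<le> root 3 (real n + 2) * u j \<and> 0 \<le> u j"
    if "n - 2 \<le> j" "j \<le> n + 2" for j
  proof -
    have "0 < root 3 (real j)" using that \<open>3 \<le> n\<close> by simp
    then have "b j = root 3 (real j) * u j" "0 \<le> u j" unfolding u_def using nonneg[of j] by auto
    moreover have "root 3 (real n - 2) \<le> root 3 (real j)" "root 3 (real j) \<le> root 3 (real n + 2)"
      using that \<open>3 \<le> n\<close> by auto
    ultimately show ?thesis by (auto intro: mult_right_mono)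
  qed
  show "root 3 (real n - 2) ^ 2 * freud_quadratic u n \<le> freud_quadratic b n"
    using window \<open>3 \<le> n\<close> freud_quadratic_mono[of n "\<lambda>j. root 3 (real n - 2) * u j" b]
    by (simp add: freud_quadratic_scale)
  show "freud_quadratic b n \<le> root 3 (real n + 2) ^ 2 * freud_quadratic u n"
    using window nonneg freud_quadratic_mono[of n b "\<lambda>j. root 3 (real n + 2) * u j"]
    by (simp add: freud_quadratic_scale)
qed

lemma freud_product_rescaled:
  fixes b :: "nat \<Rightarrow> real"
  defines "u \<equiv> \<lambda>n. b n / root 3 (real n)"
  assumes nonneg: "\<And>n. 0 \<le> b n"
    and lim: "(\<lambda>n. b n * freud_quadratic b n / real n) \<longlonglongrightarrow> 1/6"
  shows "(\<lambda>n. u n * freud_quadratic u n) \<longlonglongrightarrow> 1/6"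
proof -
  define G where "G n = b n * freud_quadratic b n / real n" for n
  define c where "c d n = root 3 (real n + d) ^ 2 * root 3 (real n) / real n" for d n
  have c_lim: "c d \<longlonglongrightarrow> 1" for d unfolding c_def by real_asymp
  have c_pos: "\<forall>\<^sub>F n in sequentially. 0 < c d n" for d
    using c_lim[of d] by (rule order_tendstoD) simp
  have bounds: "G n / c 2 n \<le> u n * freud_quadratic u n \<and> u n * freud_quadratic u n \<le> G n / c (-2) n"
    if "3 \<le> n" "0 < c 2 n" "0 < c (-2) n" for n
  proof -
    define w where "w = u n * root 3 (real n) / real n"
    have "0 \<le> w" and G_w: "G n = w * freud_quadratic b n"
      using nonneg[of n] \<open>3 \<le> n\<close> unfolding w_def G_def u_def by auto
    have c_w: "u n * freud_quadratic u n * c d n = w * (root 3 (real n + d) ^ 2 * freud_quadratic u n)" for d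
      unfolding w_def c_def by simp
    note rescaled = freud_quadratic_rescaled_bounds[of b n, OF nonneg \<open>3 \<le> n\<close>, folded u_def]
    have "u n * freud_quadratic u n * c (-2) n \<le> G n"
      unfolding c_w G_w using mult_left_mono[OF rescaled(1) \<open>0 \<le> w\<close>] by simp
    moreover have "G n \<le> u n * freud_quadratic u n * c 2 n"
      unfolding c_w G_w using mult_left_mono[OF rescaled(2) \<open>0 \<le> w\<close>] by simp
    ultimately have "u n * freud_quadratic u n * c (-2) n \<le> G n \<and> G n \<le> u n * freud_quadratic u n * c 2 n"
      by blast
    then show ?thesis using that by (simp add: field_simps)
  qed
  show ?thesis
  proof (rule tendsto_sandwich)
    show "(\<lambda>n. G n / c 2 n) \<longlonglongrightarrow> 1/6" "(\<lambda>n. G n / c (-2) n) \<longlonglongrightarrow> 1/6"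
      using tendsto_divide[OF lim[folded G_def] c_lim] by simp_all
    have "\<forall>\<^sub>F n in sequentially. 3 \<le> n \<and> 0 < c 2 n \<and> 0 < c (-2) n"
      by (intro eventually_conj eventually_ge_at_top c_pos)
    then show "\<forall>\<^sub>F n in sequentially. G n / c 2 n \<le> u n * freud_quadratic u n"
      "\<forall>\<^sub>F n in sequentially. u n * freud_quadratic u n \<le> G n / c (-2) n"
      by (auto elim!: eventually_mono dest: bounds)
  qed
qed

theorem freud_rhs_asymptotics:
  fixes b :: "nat \<Rightarrow> real"
  assumes nonneg: "\<And>n. 0 \<le> b n" and eq: "\<And>n. N \<le> n \<Longrightarrow> real n = freud_rhs \<tau> t b n"
  shows "(\<lambda>n. b n / root 3 (real n)) \<longlonglongrightarrow> 1 / root 3 60"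
proof -
  define u where "u n = b n / root 3 (real n)" for n
  define K where "K = 4 * \<bar>\<tau>\<bar> + 2 * \<bar>t\<bar> + 1"
  have u_nonneg: "0 \<le> u n" for n unfolding u_def using nonneg[of n] by simp
  have "\<forall>\<^sub>F n in sequentially. norm (u n) \<le> K + 1"
  proof (rule eventually_sequentiallyI[of "max N 1"])
    fix n assume n: "max N 1 \<le> n"
    then have "1 \<le> root 3 (real n)" by simp
    have "b n \<le> K + root 3 (real n)"
      using freud_rhs_root_bound[OF nonneg eq] n unfolding K_def by simp
    also have "\<dots> \<le> (K + 1) * root 3 (real n)"
      using mult_left_mono[OF \<open>1 \<le> root 3 (real n)\<close>, of K]
      unfolding K_def by (simp add: distrib_right)
    finally show "norm (u n) \<le> K + 1"
      using \<open>1 \<le> root 3 (real n)\<close> nonneg[of n] unfolding u_def by (simp add: divide_le_eq)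
  qed
  then have "Bseq u" by (rule BfunI)
  then obtain C where C: "\<And>n. norm (u n) \<le> C" using BseqD by metis
  have "b n \<le> C * root 3 (real n)" if "1 \<le> n" for n
    using C[of n] that unfolding u_def by (simp add: divide_le_eq)
  with nonneg eq have "(\<lambda>n. b n * freud_quadratic b n / real n) \<longlonglongrightarrow> 1/6"
    by (rule freud_rhs_leading_term)
  with nonneg have "(\<lambda>n. u n * freud_quadratic u n) \<longlonglongrightarrow> 1/6"
    unfolding u_def by (rule freud_product_rescaled)
  with \<open>Bseq u\<close> u_nonneg show ?thesis
    unfolding u_def by (rule tendsto_of_freud_product)
qed

section \<open>The weight and its inner product\<close>

lemma cubic_upper_bound:
  fixes a b y :: real
  assumes "0 \<le> y"
  shows "a * y^2 + b * y - y^3 \<le> (\<bar>a\<bar> + \<bar>b\<bar> + 1)^3"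
proof -
  define c where "c = \<bar>a\<bar> + \<bar>b\<bar> + 1"
  have "1 \<le> c" unfolding c_def by simp
  have "a * y^2 \<le> \<bar>a\<bar> * y^2" "b * y \<le> \<bar>b\<bar> * y"
    using assms by (auto intro: mult_right_mono)
  moreover have "\<bar>a\<bar> * y^2 + \<bar>b\<bar> * y - y^3 \<le> c^3"
  proof (cases "y \<le> c")
    case True
    have "c * 1 \<le> c * c" using \<open>1 \<le> c\<close> by (intro mult_left_mono) auto
    then have "\<bar>b\<bar> * c \<le> \<bar>b\<bar> * c^2"
      by (intro mult_left_mono) (auto simp: power2_eq_square)
    moreover have "\<bar>a\<bar> * y^2 + \<bar>b\<bar> * y \<le> \<bar>a\<bar> * c^2 + \<bar>b\<bar> * c"
      using True assms by (intro add_mono mult_left_mono power_mono) auto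
    moreover have "c^3 = \<bar>a\<bar> * c^2 + \<bar>b\<bar> * c^2 + c^2"
      unfolding c_def by (simp add: power2_eq_square power3_eq_cube algebra_simps)
    moreover have "0 \<le> y^3" "0 \<le> c^2" using assms by simp_all
    ultimately show ?thesis by linarith
  next
    case False
    then have "1 \<le> y" unfolding c_def by linarith
    have "\<bar>b\<bar> * y \<le> \<bar>b\<bar> * y^2"
      using \<open>1 \<le> y\<close> by (intro mult_left_mono) (auto simp: power2_eq_square)
    moreover have "(c - 1) * y^2 \<le> y * y^2"
      using False by (intro mult_right_mono) auto
    moreover have "0 \<le> c^3" unfolding c_def by simp
    ultimately show ?thesis unfolding c_def by (simp add: power3_eq_cube power2_eq_square algebra_simps)
  qed
  ultimately show ?thesis unfolding c_def by linarith
qed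

lemma omega_pos: "0 < omega \<tau> t x"
  by (simp add: omega_def)

lemma omega_minus: "omega \<tau> t (- x) = omega \<tau> t x"
  by (simp add: omega_def)

lemma borel_measurable_omega [measurable]: "omega \<tau> t \<in> borel_measurable borel"
  unfolding omega_def by measurable

lemma omega_le_gaussian:
  "omega \<tau> t x \<le> exp ((\<bar>\<tau>\<bar> + \<bar>t + 1/2\<bar> + 1)^3) * exp (- (x^2) / 2)"
proof -
  have "\<tau> * (x^2)^2 + (t + 1/2) * x^2 - (x^2)^3 \<le> (\<bar>\<tau>\<bar> + \<bar>t + 1/2\<bar> + 1)^3"
    by (rule cubic_upper_bound) simp
  then have "- (x ^ 6) + \<tau> * x ^ 4 + t * x ^ 2 \<le> (\<bar>\<tau>\<bar> + \<bar>t + 1/2\<bar> + 1)^3 + - (x^2) / 2"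
    by (simp add: power_mult[symmetric] algebra_simps)
  then show ?thesis
    unfolding omega_def by (simp flip: exp_add)
qed

lemma integrable_monomial_omega: "integrable lborel (\<lambda>x. x ^ k * omega \<tau> t x)"
proof -
  define C where "C = exp ((\<bar>\<tau>\<bar> + \<bar>t + 1/2\<bar> + 1)^3)"
  have "integrable lborel (\<lambda>x. (C * sqrt (2 * pi)) * (std_normal_density x * \<bar>x\<bar> ^ k))"
    by (intro integrable_mult_right integrable_std_normal_moment_abs)
  then show ?thesis
  proof (rule Bochner_Integration.integrable_bound)
    show "AE x in lborel. norm (x ^ k * omega \<tau> t x)
        \<le> norm ((C * sqrt (2 * pi)) * (std_normal_density x * \<bar>x\<bar> ^ k))"
    proof (rule AE_I2)
      fix x :: real
      have "norm (x ^ k * omega \<tau> t x) = \<bar>x\<bar> ^ k * omega \<tau> t x"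
        using omega_pos[of \<tau> t x] by (simp add: abs_mult power_abs)
      also have "\<dots> \<le> \<bar>x\<bar> ^ k * (C * exp (- (x^2) / 2))"
        unfolding C_def by (intro mult_left_mono omega_le_gaussian) auto
      also have "\<dots> = (C * sqrt (2 * pi)) * (std_normal_density x * \<bar>x\<bar> ^ k)"
        by (simp add: std_normal_density_def)
      finally show "norm (x ^ k * omega \<tau> t x)
          \<le> norm ((C * sqrt (2 * pi)) * (std_normal_density x * \<bar>x\<bar> ^ k))"
        by simp
    qed
  qed measurable
qed

lemma integrable_poly_omega: "integrable lborel (\<lambda>x. poly p x * omega \<tau> t x)"
proof -
  have "integrable lborel (\<lambda>x. \<Sum>i\<le>degree p. coeff p i * (x ^ i * omega \<tau> t x))"
    by (intro Bochner_Integration.integrable_sum integrable_mult_right integrable_monomial_omega)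
  then show ?thesis by (simp add: poly_altdef sum_distrib_right mult.assoc)
qed

lemma wip_eq_integral_mult: "wip \<tau> t p q = (LINT x|lborel. poly (p * q) x * omega \<tau> t x)"
  by (simp add: wip_def)

lemma wip_commute: "wip \<tau> t p q = wip \<tau> t q p"
  by (simp add: wip_def mult.commute)

lemma wip_add_left: "wip \<tau> t (p + r) q = wip \<tau> t p q + wip \<tau> t r q"
  unfolding wip_eq_integral_mult distrib_right poly_add
  by (rule Bochner_Integration.integral_add[OF integrable_poly_omega integrable_poly_omega])

lemma wip_smult_left: "wip \<tau> t (smult c p) q = c * wip \<tau> t p q"
  unfolding wip_eq_integral_mult by (simp add: mult.assoc)

lemma wip_diff_left: "wip \<tau> t (p - r) q = wip \<tau> t p q - wip \<tau> t r q"
proof -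
  have "p - r = p + smult (-1) r" by simp
  then show ?thesis by (simp only: wip_add_left wip_smult_left)
qed

lemma wip_add_right: "wip \<tau> t q (p + r) = wip \<tau> t q p + wip \<tau> t q r"
  by (metis wip_add_left wip_commute)

lemma wip_smult_right: "wip \<tau> t q (smult c p) = c * wip \<tau> t q p"
  by (metis wip_smult_left wip_commute)

lemma wip_diff_right: "wip \<tau> t q (p - r) = wip \<tau> t q p - wip \<tau> t q r"
  by (metis wip_diff_left wip_commute)

lemma wip_pCons_0: "wip \<tau> t (pCons 0 p) q = wip \<tau> t p (pCons 0 q)"
  unfolding wip_def by (simp add: ac_simps)

lemma wip_self_pos:
  assumes "p \<noteq> 0"
  shows "0 < wip \<tau> t p p"
proof -
  have nonneg: "AE x in lborel. 0 \<le> poly (p * p) x * omega \<tau> t x"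
    using omega_pos[of \<tau> t] by (intro AE_I2) (simp add: less_imp_le)
  have "wip \<tau> t p p \<noteq> 0"
  proof
    assume "wip \<tau> t p p = 0"
    then have "AE x in lborel. poly (p * p) x * omega \<tau> t x = 0"
      unfolding wip_eq_integral_mult
      using integral_nonneg_eq_0_iff_AE[OF integrable_poly_omega nonneg] by simp
    then have "AE x in lborel. x \<in> {x. poly p x = 0}"
    proof eventually_elim
      case (elim x)
      with omega_pos[of \<tau> t x] show ?case by simp
    qed
    moreover have "{x. poly p x = 0} \<in> null_sets lborel"
      using poly_roots_finite[OF assms] by (intro countable_imp_null_set_lborel countable_finite)
    then have "AE x in lborel. x \<notin> {x. poly p x = 0}"
      by (rule AE_not_in)
    ultimately have "AE x::real in lborel. False"
      by eventually_elim simp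
    then show False
      using AE_iff_measurable[of UNIV lborel "\<lambda>x::real. False"] by simp
  qed
  moreover have "0 \<le> wip \<tau> t p p"
    unfolding wip_eq_integral_mult using nonneg by (rule integral_nonneg_AE)
  ultimately show ?thesis by simp
qed

lemma poly_reflect:
  fixes p :: "real poly"
  shows "poly (p \<circ>\<^sub>p [:0, -1:]) x = poly p (- x)"
proof -
  have "poly [:0, -1:] x = - x" by simp
  then show ?thesis by (simp only: poly_pcompose)
qed

lemma wip_reflect: "wip \<tau> t (p \<circ>\<^sub>p [:0, -1:]) q = wip \<tau> t p (q \<circ>\<^sub>p [:0, -1:])"
proof -
  define f where "f x = poly p x * poly q (- x) * omega \<tau> t x" for x
  have "wip \<tau> t (p \<circ>\<^sub>p [:0, -1:]) q = (LINT x|lborel. f (- x))"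
    unfolding wip_def f_def poly_reflect by (simp add: omega_minus)
  also have "\<dots> = (LINT x|lborel. f x)"
    using lborel_integral_real_affine[where c = "-1" and t = 0 and f = f] by simp
  finally show ?thesis
    unfolding wip_def f_def poly_reflect .
qed

definition potential_deriv :: "real \<Rightarrow> real \<Rightarrow> real poly" where
  "potential_deriv \<tau> t = [:0, -2 * t, 0, -4 * \<tau>, 0, 6:]"

lemma omega_has_real_derivative:
  "(omega \<tau> t has_real_derivative - poly (potential_deriv \<tau> t) x * omega \<tau> t x) (at x)"
  unfolding omega_def potential_deriv_def
  by (auto intro!: derivative_eq_intros simp: algebra_simps power_def)

lemma poly_times_omega_tendsto_0:
  "((\<lambda>x. poly p x * omega \<tau> t x) \<longlongrightarrow> 0) at_top"
  "((\<lambda>x. poly p x * omega \<tau> t x) \<longlongrightarrow> 0) at_bot"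
proof -
  have "((\<lambda>x. x ^ i * omega \<tau> t x) \<longlongrightarrow> 0) at_top" "((\<lambda>x. x ^ i * omega \<tau> t x) \<longlongrightarrow> 0) at_bot"
    for i unfolding omega_def by real_asymp+
  then have "((\<lambda>x. \<Sum>i\<le>degree p. coeff p i * (x ^ i * omega \<tau> t x)) \<longlongrightarrow> 0) at_top"
    "((\<lambda>x. \<Sum>i\<le>degree p. coeff p i * (x ^ i * omega \<tau> t x)) \<longlongrightarrow> 0) at_bot"
    by (auto intro!: tendsto_null_sum tendsto_mult_right_zero)
  then show "((\<lambda>x. poly p x * omega \<tau> t x) \<longlongrightarrow> 0) at_top"
    "((\<lambda>x. poly p x * omega \<tau> t x) \<longlongrightarrow> 0) at_bot"
    by (simp_all add: poly_altdef sum_distrib_right mult.assoc)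
qed

lemma integral_pderiv_omega:
  "(LINT x|lborel. poly (pderiv p) x * omega \<tau> t x)
     = (LINT x|lborel. poly (p * potential_deriv \<tau> t) x * omega \<tau> t x)"
proof -
  define g where "g x = poly (pderiv p - p * potential_deriv \<tau> t) x * omega \<tau> t x" for x
  define F where "F x = poly p x * omega \<tau> t x" for x
  have "(LBINT x=-\<infinity>..\<infinity>. g x) = 0 - 0"
  proof (rule interval_integral_FTC_integrable[where F = F])
    fix x :: real
    have "(F has_real_derivative
        poly p x * (- poly (potential_deriv \<tau> t) x * omega \<tau> t x) + poly (pderiv p) x * omega \<tau> t x) (at x)"
      unfolding F_def by (rule DERIV_mult'[OF poly_DERIV omega_has_real_derivative])
    then show "(F has_vector_derivative g x) (at x)"
      unfolding g_def has_real_derivative_iff_has_vector_derivative[symmetric]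
      by (simp add: algebra_simps)
    show "isCont g x"
      unfolding g_def omega_def by (intro continuous_intros)
  next
    show "set_integrable lborel (einterval (- \<infinity>) \<infinity>) g"
      unfolding einterval_eq_UNIV set_integrable_def g_def
      using integrable_poly_omega[of "pderiv p - p * potential_deriv \<tau> t" \<tau> t] by simp
    show "((F \<circ> real_of_ereal) \<longlongrightarrow> 0) (at_right (- \<infinity>))"
      "((F \<circ> real_of_ereal) \<longlongrightarrow> 0) (at_left \<infinity>)"
      unfolding ereal_tendsto_simps1 F_def by (rule poly_times_omega_tendsto_0)+
  qed simp
  then have "(LINT x|lborel. g x) = 0"
    by (simp add: interval_lebesgue_integral_def set_lebesgue_integral_def einterval_eq_UNIV)
  moreover have "(LINT x|lborel. g x) = (LINT x|lborel. poly (pderiv p) x * omega \<tau> t x)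
      - (LINT x|lborel. poly (p * potential_deriv \<tau> t) x * omega \<tau> t x)"
    unfolding g_def poly_diff[of "pderiv p"] left_diff_distrib
    by (rule Bochner_Integration.integral_diff[OF integrable_poly_omega integrable_poly_omega])
  ultimately show ?thesis by simp
qed

lemma wip_pderiv:
  "wip \<tau> t (pderiv p) q + wip \<tau> t p (pderiv q) = wip \<tau> t (potential_deriv \<tau> t * p) q"
proof -
  have wip_1: "wip \<tau> t (a * b) 1 = wip \<tau> t a b" for a b by (simp add: wip_def)
  have "wip \<tau> t (pderiv p) q + wip \<tau> t p (pderiv q) = wip \<tau> t (pderiv (p * q)) 1"
    by (simp add: pderiv_mult wip_add_left wip_1 wip_commute[of \<tau> t q] add.commute)
  also have "\<dots> = wip \<tau> t (p * q * potential_deriv \<tau> t) 1"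
    using integral_pderiv_omega[of "p * q" \<tau> t] by (simp add: wip_def)
  also have "\<dots> = wip \<tau> t (potential_deriv \<tau> t * p) q"
    by (simp add: wip_def ac_simps)
  finally show ?thesis .
qed

section \<open>Monic orthogonal polynomials and the Freud equation\<close>

lemma degree_diff_less_of_coeff_eq:
  fixes p q :: "'a::ring poly"
  assumes "degree p \<le> n" "degree q \<le> n" "coeff p n = coeff q n" "0 < n"
  shows "degree (p - q) < n"
proof -
  have "degree (p - q) \<le> n - 1"
  proof (rule degree_le, intro allI impI)
    fix i assume "n - 1 < i"
    then have "i = n \<or> n < i" by linarith
    then show "coeff (p - q) i = 0" using assms by (auto simp: coeff_eq_0)
  qed
  with assms(4) show ?thesis by linarith
qed

lemma pCons_0_add: "pCons 0 (p + q) = pCons 0 p + pCons (0::'a::comm_monoid_add) q"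
  by simp

lemma pCons_0_smult: "pCons 0 (smult c p) = smult c (pCons (0::'a::comm_semiring_0) p)"
  by simp

context
  fixes \<tau> t :: real and P :: "nat \<Rightarrow> real poly"
  assumes OPS: "monic_OPS \<tau> t P"
begin

lemma degree_P: "degree (P n) = n"
  using OPS by (simp add: monic_OPS_def)

lemma coeff_P_degree: "coeff (P n) n = 1"
  using OPS unfolding monic_OPS_def by (metis degree_P)

lemma P_nonzero: "P n \<noteq> 0"
  using coeff_P_degree[of n] by auto

lemma wip_P_P: "wip \<tau> t (P m) (P n) = (if m = n then hnorm \<tau> t P n else 0)"
  using OPS by (simp add: monic_OPS_def hnorm_def)

lemma hnorm_pos: "0 < hnorm \<tau> t P n"
  unfolding hnorm_def using P_nonzero by (rule wip_self_pos)

lemma rbeta_pos: "0 < rbeta \<tau> t P n"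
  unfolding rbeta_def using hnorm_pos by simp

lemma hnorm_Suc: "hnorm \<tau> t P (Suc n) = rbeta \<tau> t P (Suc n) * hnorm \<tau> t P n"
  unfolding rbeta_def using hnorm_pos[of n] by simp

lemma P_0: "P 0 = 1"
  using degree_0_id[of "P 0"] degree_P[of 0] coeff_P_degree[of 0] by (simp add: one_pCons)

lemma wip_eq_0_if_orthogonal_lower:
  assumes "\<And>j. j < n \<Longrightarrow> wip \<tau> t d (P j) = 0" "degree q < n"
  shows "wip \<tau> t d q = 0"
  using assms
proof (induction n arbitrary: q)
  case 0
  then show ?case by simp
next
  case (Suc n)
  define r where "r = q - smult (coeff q n) (P n)"
  have "degree r < n \<or> n = 0 \<and> r = 0"
    unfolding r_def using Suc.prems(2) degree_P[of n] coeff_P_degree[of n]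
    by (cases "n = 0")
       (auto simp: P_0 intro!: degree_diff_less_of_coeff_eq order_trans[OF degree_smult_le]
             dest: degree_0_id)
  then have "wip \<tau> t d r = 0" using Suc by (auto simp: wip_def)
  moreover have "wip \<tau> t d q = wip \<tau> t d (r + smult (coeff q n) (P n))"
    unfolding r_def by simp
  ultimately show ?case
    using Suc.prems(1) by (simp only: wip_add_right wip_smult_right)
qed

lemma wip_P_lower_degree: "degree q < n \<Longrightarrow> wip \<tau> t (P n) q = 0"
  by (rule wip_eq_0_if_orthogonal_lower) (simp_all add: wip_P_P)

lemma eq_0_if_orthogonal_lower:
  assumes "degree d < n" "\<And>j. j < n \<Longrightarrow> wip \<tau> t d (P j) = 0"
  shows "d = 0"
  using wip_eq_0_if_orthogonal_lower[OF assms(2,1)] wip_self_pos[of d \<tau> t] by auto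

lemma poly_P_minus: "poly (P n) (- x) = (-1) ^ n * poly (P n) x"
proof (cases "n = 0")
  case True
  then show ?thesis by (simp add: P_0)
next
  case False
  define Q where "Q = smult ((-1) ^ n) (P n \<circ>\<^sub>p [:0, -1:])"
  have "lead_coeff (P n \<circ>\<^sub>p [:0, -1:]) = (-1) ^ n"
    using lead_coeff_comp[of "[:0, -1:]" "P n"] by (simp add: degree_P coeff_P_degree)
  then have "coeff Q n = 1" "degree Q = n"
    unfolding Q_def by (simp_all add: degree_pcompose degree_P flip: power_mult_distrib)
  then have "degree (P n - Q) < n"
    using False by (intro degree_diff_less_of_coeff_eq) (simp_all add: degree_P coeff_P_degree)
  moreover have "wip \<tau> t (P n - Q) (P j) = 0" if "j < n" for j
  proof -
    have "wip \<tau> t Q (P j) = (-1) ^ n * wip \<tau> t (P n) (P j \<circ>\<^sub>p [:0, -1:])"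
      unfolding Q_def by (simp add: wip_smult_left wip_reflect)
    also have "\<dots> = 0"
      using that by (simp add: wip_P_lower_degree degree_pcompose degree_P)
    finally show ?thesis using that by (simp add: wip_diff_left wip_P_P)
  qed
  ultimately have "P n - Q = 0" by (rule eq_0_if_orthogonal_lower)
  then have "poly (P n) (- x) = poly Q (- x)" by simp
  then show ?thesis unfolding Q_def by (simp add: poly_reflect)
qed

lemma wip_xP_P: "wip \<tau> t (pCons 0 (P n)) (P n) = 0"
proof -
  define f where "f x = poly (pCons 0 (P n)) x * poly (P n) x * omega \<tau> t x" for x
  have "f (- x) = - f x" for x
    unfolding f_def
    by (simp add: poly_P_minus omega_minus power_mult_distrib[symmetric] algebra_simps flip: power_add)
  then have "(LINT x|lborel. f x) = - (LINT x|lborel. f x)"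
    using lborel_integral_real_affine[where c = "-1" and t = 0 and f = f] by simp
  then show ?thesis unfolding wip_def f_def by simp
qed

lemma wip_P_xP_pred:
  assumes "1 \<le> n"
  shows "wip \<tau> t (P n) (pCons 0 (P (n - 1))) = hnorm \<tau> t P n"
proof -
  have "degree (pCons 0 (P (n - 1)) - P n) < n"
    using assms by (intro degree_diff_less_of_coeff_eq)
      (simp_all add: degree_P coeff_P_degree P_nonzero coeff_pCons split: nat.split)
  then show ?thesis
    using wip_P_lower_degree[of "pCons 0 (P (n - 1)) - P n" n]
    by (simp add: wip_diff_right wip_P_P)
qed

lemma three_term_recurrence:
  assumes "1 \<le> n"
  shows "pCons 0 (P n) = P (Suc n) + smult (rbeta \<tau> t P n) (P (n - 1))"
proof -
  define d where "d = pCons 0 (P n) - P (Suc n) - smult (rbeta \<tau> t P n) (P (n - 1))"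
  have "degree (pCons 0 (P n) - P (Suc n)) < Suc n"
    by (rule degree_diff_less_of_coeff_eq) (simp_all add: degree_P coeff_P_degree P_nonzero)
  moreover have "degree (smult (rbeta \<tau> t P n) (P (n - 1))) < Suc n"
    using degree_smult_le[of "rbeta \<tau> t P n" "P (n - 1)"] degree_P[of "n - 1"] by linarith
  ultimately have "degree d < Suc n"
    unfolding d_def by (rule degree_diff_less)
  moreover have "wip \<tau> t d (P j) = 0" if j: "j < Suc n" for j
  proof -
    have d_j: "wip \<tau> t d (P j) = wip \<tau> t (P n) (pCons 0 (P j)) - wip \<tau> t (P (Suc n)) (P j)
        - rbeta \<tau> t P n * wip \<tau> t (P (n - 1)) (P j)"
      unfolding d_def by (simp add: wip_diff_left wip_smult_left wip_pCons_0)
    consider "j = n" | "j = n - 1" | "j < n - 1" using j by linarith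
    then show ?thesis
    proof cases
      case 1
      then show ?thesis
        using d_j wip_xP_P[of n] assms by (simp add: wip_pCons_0 wip_P_P)
    next
      case 2
      then show ?thesis
        using d_j assms wip_P_xP_pred hnorm_Suc[of "n - 1"] by (simp add: wip_P_P)
    next
      case 3
      then have "wip \<tau> t (P n) (pCons 0 (P j)) = 0"
        by (intro wip_P_lower_degree) (simp add: degree_pCons_eq P_nonzero degree_P)
      then show ?thesis using d_j 3 by (simp add: wip_P_P)
    qed
  qed
  ultimately have "d = 0" by (rule eq_0_if_orthogonal_lower)
  then show ?thesis unfolding d_def by (simp add: algebra_simps)
qed

lemma three_term_recurrence_Suc:
  "pCons 0 (P (Suc m)) = P (Suc (Suc m)) + smult (rbeta \<tau> t P (Suc m)) (P m)"
  using three_term_recurrence[of "Suc m"] by simp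

lemma wip_xP_pred:
  assumes "1 \<le> n"
  shows "wip \<tau> t (pCons 0 (P n)) (P (n - 1)) = hnorm \<tau> t P (n - 1) * rbeta \<tau> t P n"
proof -
  obtain k where "n = Suc k" using assms by (cases n) auto
  then show ?thesis
    by (simp add: three_term_recurrence_Suc wip_add_left wip_smult_left wip_P_P)
qed

lemma wip_x2P_xP_pred:
  assumes "2 \<le> n"
  defines "B \<equiv> rbeta \<tau> t P"
  shows "wip \<tau> t (pCons 0 (pCons 0 (P n))) (pCons 0 (P (n - 1)))
    = hnorm \<tau> t P (n - 1) * B n * (B (n - 1) + B n + B (n + 1))"
proof -
  obtain k where "n = Suc (Suc k)"
    using le_Suc_ex[OF assms(1)] by (auto simp: numeral_eq_Suc)
  then show ?thesis
    unfolding B_def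
    apply (simp only: diff_Suc_1 three_term_recurrence_Suc pCons_0_add pCons_0_smult)
    apply (simp add: wip_add_left wip_add_right wip_smult_left wip_smult_right wip_P_P
        hnorm_Suc)
    apply (simp add: algebra_simps)
    done
qed

lemma wip_x2P_x3P_pred:
  assumes "4 \<le> n"
  defines "B \<equiv> rbeta \<tau> t P"
  shows "wip \<tau> t (pCons 0 (pCons 0 (P n))) (pCons 0 (pCons 0 (pCons 0 (P (n - 1)))))
    = hnorm \<tau> t P (n - 1) * B n * freud_quadratic B n"
proof -
  obtain k where "n = Suc (Suc (Suc (Suc k)))"
    using le_Suc_ex[OF assms(1)] by (auto simp: numeral_eq_Suc)
  then show ?thesis
    unfolding B_def freud_quadratic_def
    apply (simp only: diff_Suc_1 three_term_recurrence_Suc pCons_0_add pCons_0_smult)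
    apply (simp add: wip_add_left wip_add_right wip_smult_left wip_smult_right wip_P_P
        hnorm_Suc)
    apply (simp add: algebra_simps power2_eq_square)
    done
qed

lemma potential_deriv_mult:
  "potential_deriv \<tau> t * p = smult 6 (pCons 0 (pCons 0 (pCons 0 (pCons 0 (pCons 0 p)))))
     - smult (4 * \<tau>) (pCons 0 (pCons 0 (pCons 0 p))) - smult (2 * t) (pCons 0 p)"
  by (simp add: potential_deriv_def algebra_simps smult_add_right)

lemma wip_pderiv_P_pred:
  assumes "2 \<le> n"
  shows "wip \<tau> t (pderiv (P n)) (P (n - 1)) = real n * hnorm \<tau> t P (n - 1)"
proof -
  have "coeff (pderiv (P n)) (n - 1) = real n"
    using assms coeff_P_degree[of n] by (simp add: coeff_pderiv)
  then have "degree (pderiv (P n) - smult (real n) (P (n - 1))) < n - 1"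
    using assms by (intro degree_diff_less_of_coeff_eq)
      (simp_all add: degree_pderiv degree_P coeff_P_degree)
  then have "wip \<tau> t (P (n - 1)) (pderiv (P n) - smult (real n) (P (n - 1))) = 0"
    by (rule wip_P_lower_degree)
  then show ?thesis
    by (simp add: wip_diff_right wip_smult_right wip_commute hnorm_def)
qed

lemma wip_potential_deriv_P_pred:
  assumes "4 \<le> n"
  shows "wip \<tau> t (potential_deriv \<tau> t * P n) (P (n - 1))
    = hnorm \<tau> t P (n - 1) * freud_rhs \<tau> t (rbeta \<tau> t P) n"
proof -
  define B where "B = rbeta \<tau> t P"
  define h where "h = hnorm \<tau> t P (n - 1)"
  have "wip \<tau> t (pCons 0 (P n)) (P (n - 1)) = h * B n"
    "wip \<tau> t (pCons 0 (pCons 0 (P n))) (pCons 0 (P (n - 1))) = h * B n * (B (n - 1) + B n + B (n + 1))"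
    "wip \<tau> t (pCons 0 (pCons 0 (P n))) (pCons 0 (pCons 0 (pCons 0 (P (n - 1)))))
      = h * B n * freud_quadratic B n"
    using assms wip_xP_pred[of n] wip_x2P_xP_pred[of n] wip_x2P_x3P_pred[of n]
    unfolding h_def B_def by (simp_all add: mult.commute)
  moreover have "wip \<tau> t (potential_deriv \<tau> t * P n) (P (n - 1))
    = 6 * wip \<tau> t (pCons 0 (pCons 0 (P n))) (pCons 0 (pCons 0 (pCons 0 (P (n - 1)))))
    - 4 * \<tau> * wip \<tau> t (pCons 0 (pCons 0 (P n))) (pCons 0 (P (n - 1)))
    - 2 * t * wip \<tau> t (pCons 0 (P n)) (P (n - 1))"
    unfolding potential_deriv_mult by (simp add: wip_diff_left wip_smult_left wip_pCons_0)
  ultimately show ?thesis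
    unfolding freud_rhs_def h_def B_def by (simp add: algebra_simps)
qed

theorem freud_equation:
  assumes "4 \<le> n"
  shows "real n = freud_rhs \<tau> t (rbeta \<tau> t P) n"
proof -
  have "wip \<tau> t (P n) (pderiv (P (n - 1))) = 0"
    using assms by (intro wip_P_lower_degree) (simp add: degree_pderiv degree_P)
  with wip_pderiv[of \<tau> t "P n" "P (n - 1)"] wip_pderiv_P_pred[of n]
    wip_potential_deriv_P_pred[OF assms] assms
  have "real n * hnorm \<tau> t P (n - 1) = hnorm \<tau> t P (n - 1) * freud_rhs \<tau> t (rbeta \<tau> t P) n"
    by simp
  then show ?thesis
    using hnorm_pos[of "n - 1"] by simp
qed

end

theorem lemma3p5:
  fixes \<tau> t :: real and P :: "nat \<Rightarrow> real poly"
  assumes "monic_OPS \<tau> t P"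
  shows "(\<lambda>n. rbeta \<tau> t P (Suc n) / root 3 (real (Suc n)))
           \<longlonglongrightarrow> 1 / root 3 60"
proof -
  have "(\<lambda>n. rbeta \<tau> t P n / root 3 (real n)) \<longlonglongrightarrow> 1 / root 3 60"
  proof (rule freud_rhs_asymptotics[where N = 4])
    show "0 \<le> rbeta \<tau> t P n" for n
      using rbeta_pos[OF assms] by (rule less_imp_le)
    show "real n = freud_rhs \<tau> t (rbeta \<tau> t P) n" if "4 \<le> n" for n
      using freud_equation[OF assms that] .
  qed
  then show ?thesis by (rule LIMSEQ_Suc)
qed

end
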